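(* Let $\Sigma=\{\sigma_0,\sigma_1,\sigma_2\}$ and consider two users with confusion graphs $G_1=(\Sigma,\{\sigma_0\sigma_1\})$ and $G_2=(\Sigma,\emptyset)$. Then the following rate vectors are optimal: (i) $(R_1,\log_2 3-R_1)$ for $R_1\in[0,H(2/3)]$; (ii) $(H(R_2),R_2)$ for $R_2\in[1/2,2/3]$.
   Context: $H(x)=-x\log_2 x-(1-x)\log_2(1-x)$ is the binary entropy function (so $H(2/3)=\log_2 3-2/3$). Setting: a sender broadcasts a word of length $n$ over a finite alphabet $\Sigma$ to users; user $i$ has a confusion graph $G_i$ on $\Sigma$, where $ab$ is an edge iff user $i$ cannot distinguish $a$ and $b$. Words $x,y\in\Sigma^n$ are distinguishable by user $i$ if some coordinate $t$ has $x_t\neq y_t$ and $x_ty_t$ not an edge of $G_i$. A vector $(m_1,m_2)$ is feasible for length $n$ if there is $E:[m_1]\times[m_2]\to\Sigma^n$ such that for each $i$ and tuples $a,a'$ with $a_i\neq a'_i$, $E(a),E(a')$ are distinguishable by user $i$. A rate vector $(R_1,R_2)$ is feasible if there are feasible vectors for lengths $n\to\infty$ with $R_i=\lim\frac{\log_2 m_i^{(n)}}{n}$. A rate vector is optimal if it is feasible and no user can increase his rate while the other user keeps the same rate. *)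

theory Defs
  imports Complex_Main
begin

text \<open>Binary entropy function H(x) = -x log2 x - (1-x) log2 (1-x)
  (with the usual convention 0 log 0 = 0, which holds here since log 2 0 = 0).\<close>
definition bin_entropy :: "real \<Rightarrow> real" where
  "bin_entropy x = - x * log 2 x - (1 - x) * log 2 (1 - x)"

text \<open>A confusion graph is
  a relation G on the alphabet: G a b means the user cannot distinguish a and b.\<close>
definition distinguishable :: "('a \<Rightarrow> 'a \<Rightarrow> bool) \<Rightarrow> 'a list \<Rightarrow> 'a list \<Rightarrow> bool" where
  "distinguishable G x y \<longleftrightarrow>
     (\<exists>t < length x. t < length y \<and> x ! t \<noteq> y ! t \<and> \<not> G (x ! t) (y ! t))"

definition feasible_vector ::
  "'a set \<Rightarrow> ('a \<Rightarrow> 'a \<Rightarrow> bool) \<Rightarrow> ('a \<Rightarrow> 'a \<Rightarrow> bool) \<Rightarrow> nat \<Rightarrow> nat \<Rightarrow> nat \<Rightarrow> bool" where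
  "feasible_vector \<Sigma> G1 G2 n m1 m2 \<longleftrightarrow> m1 \<ge> 1 \<and> m2 \<ge> 1 \<and>
     (\<exists>E :: nat \<Rightarrow> nat \<Rightarrow> 'a list.
        (\<forall>a1 < m1. \<forall>a2 < m2. length (E a1 a2) = n \<and> set (E a1 a2) \<subseteq> \<Sigma>) \<and>
        (\<forall>a1 < m1. \<forall>a2 < m2. \<forall>a1' < m1. \<forall>a2' < m2.
            a1 \<noteq> a1' \<longrightarrow> distinguishable G1 (E a1 a2) (E a1' a2')) \<and>
        (\<forall>a1 < m1. \<forall>a2 < m2. \<forall>a1' < m1. \<forall>a2' < m2.
            a2 \<noteq> a2' \<longrightarrow> distinguishable G2 (E a1 a2) (E a1' a2')))"

definition feasible_rate ::
  "'a set \<Rightarrow> ('a \<Rightarrow> 'a \<Rightarrow> bool) \<Rightarrow> ('a \<Rightarrow> 'a \<Rightarrow> bool) \<Rightarrow> real \<Rightarrow> real \<Rightarrow> bool" where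
  "feasible_rate \<Sigma> G1 G2 R1 R2 \<longleftrightarrow>
     (\<exists>n m1 m2 :: nat \<Rightarrow> nat.
        filterlim n at_top sequentially \<and>
        (\<forall>k. feasible_vector \<Sigma> G1 G2 (n k) (m1 k) (m2 k)) \<and>
        (\<lambda>k. log 2 (real (m1 k)) / real (n k)) \<longlonglongrightarrow> R1 \<and>
        (\<lambda>k. log 2 (real (m2 k)) / real (n k)) \<longlonglongrightarrow> R2)"

definition optimal_rate ::
  "'a set \<Rightarrow> ('a \<Rightarrow> 'a \<Rightarrow> bool) \<Rightarrow> ('a \<Rightarrow> 'a \<Rightarrow> bool) \<Rightarrow> real \<Rightarrow> real \<Rightarrow> bool" where
  "optimal_rate \<Sigma> G1 G2 R1 R2 \<longleftrightarrow>
     feasible_rate \<Sigma> G1 G2 R1 R2 \<and>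
     (\<forall>R1'. R1' > R1 \<longrightarrow> \<not> feasible_rate \<Sigma> G1 G2 R1' R2) \<and>
     (\<forall>R2'. R2' > R2 \<longrightarrow> \<not> feasible_rate \<Sigma> G1 G2 R1 R2')"

end

theory Submission
  imports Defs "HOL-Library.FuncSet" "HOL-Real_Asymp.Real_Asymp"
begin

text \<open>
  Distinct message pairs need distinct codewords, so \<open>m\<^sub>1 m\<^sub>2 \<le> 3\<^sup>n\<close> and
  \<open>R\<^sub>1 + R\<^sub>2 \<le> log 3\<close>. For user 1 alone, sort his messages by the Hamming weight
  (number of letters other than \<open>\<sigma>\<^sub>2\<close>) of their codewords. User 1 only sees where
  \<open>\<sigma>\<^sub>2\<close> occurs, so messages having a codeword of weight at least \<open>\<rho>n\<close> have pairwise
  distinct \<open>\<sigma>\<^sub>2\<close>-patterns, of which there are about \<open>2\<^bsup>nH(\<rho>)\<^esup>\<close>; every other message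
  owns \<open>m\<^sub>2\<close> distinct codewords of weight below \<open>\<rho>n\<close>, and there are about
  \<open>2\<^bsup>n(H(\<rho>)+\<rho>)\<^esup>\<close> such words (both counts are Chernoff bounds). Hence
  \<open>R\<^sub>1 \<le> max H(\<rho>) (H(\<rho>) + \<rho> - R\<^sub>2)\<close> for \<open>\<rho> \<in> [1/2, 2/3]\<close>.

  Use the words whose support (the positions not carrying \<open>\<sigma>\<^sub>2\<close>) has
  size \<open>\<lfloor>\<rho>n\<rfloor>\<close>, labelled arbitrarily by \<open>\<sigma>\<^sub>0, \<sigma>\<^sub>1\<close> on the support: user 1's message picks
  a block of \<open>2\<^bsup>sn\<^esup>\<close> supports, user 2's message picks a support in the block and the
  labels. This achieves \<open>(H(\<rho>) - s, \<rho> + s)\<close> for \<open>0 \<le> s \<le> H(\<rho>)\<close>. With \<open>\<rho> = 2/3\<close>, where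
  \<open>H(\<rho>) + \<rho> = log 3\<close>, this sweeps the sum-rate line, and with \<open>s = 0\<close> the entropy
  curve; as \<open>H\<close> decreases strictly on \<open>[1/2, 1)\<close>, the converse shows these points optimal.
\<close>

section \<open>Binomial coefficients and the binary entropy\<close>

definition binomial_term :: "nat \<Rightarrow> nat \<Rightarrow> nat \<Rightarrow> nat" where
  "binomial_term n k j = (n choose j) * k ^ j * (n - k) ^ (n - j)"

lemma binomial_term_Suc:
  assumes "j < n"
  shows "Suc j * (n - k) * binomial_term n k (Suc j) = (n - j) * k * binomial_term n k j"
proof -
  have choose: "Suc j * (n choose Suc j) = (n - j) * (n choose j)"
    using binomial_absorb_comp[of n j] binomial_absorption[of j n] by simp
  have "n - j = Suc (n - Suc j)" using assms by simp
  then show ?thesis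
    unfolding binomial_term_def power_Suc
    by (metis (no_types, lifting) choose mult.assoc mult.left_commute power_Suc)
qed

lemma binomial_term_mono_below:
  assumes "j < k" "k \<le> n"
  shows "binomial_term n k j \<le> binomial_term n k (Suc j)"
proof (cases "k = n")
  case True
  then show ?thesis using assms by (simp add: binomial_term_def power_0_left)
next
  case False
  have "Suc j * (n - k) \<le> (n - j) * k"
    using mult_le_mono[of "Suc j" k "n - k" "n - j"] assms by (simp add: mult.commute)
  then have "(n - j) * k * binomial_term n k j \<le> (n - j) * k * binomial_term n k (Suc j)"
    unfolding binomial_term_Suc[of j n k, symmetric, OF less_le_trans[OF assms]]
    by (rule mult_le_mono1)
  moreover have "0 < (n - j) * k" using assms by simp
  ultimately show ?thesis by (simp only: mult_le_cancel1)
qed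

lemma binomial_term_antimono_above:
  assumes "k \<le> j" "j < n"
  shows "binomial_term n k (Suc j) \<le> binomial_term n k j"
proof -
  have "(n - j) * k \<le> Suc j * (n - k)"
    using mult_le_mono[of k "Suc j" "n - j" "n - k"] assms by (simp add: mult.commute)
  then have "Suc j * (n - k) * binomial_term n k (Suc j) \<le> Suc j * (n - k) * binomial_term n k j"
    unfolding binomial_term_Suc[OF assms(2)] by (rule mult_le_mono1)
  moreover have "0 < Suc j * (n - k)" using assms by simp
  ultimately show ?thesis by (simp only: mult_le_cancel1)
qed

lemma binomial_term_le_mode:
  assumes "k \<le> n" "j \<le> n"
  shows "binomial_term n k j \<le> binomial_term n k k"
proof (cases "j \<le> k")
  case True
  then show ?thesis
  proof (induction j rule: inc_induct)
    case (step i)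
    then show ?case using binomial_term_mono_below[of i k n] assms by linarith
  qed simp
next
  case False
  then have "k \<le> j" by simp
  then show ?thesis using assms(2)
  proof (induction j rule: dec_induct)
    case (step i)
    then show ?case using binomial_term_antimono_above[of k i n] by linarith
  qed simp
qed

lemma binomial_term_mode_bounds:
  assumes "k \<le> n"
  shows "binomial_term n k k \<le> n ^ n" and "n ^ n \<le> (n + 1) * binomial_term n k k"
proof -
  have sum: "n ^ n = (\<Sum>j\<le>n. binomial_term n k j)"
    using binomial_ring[of k "n - k" n] assms by (simp add: binomial_term_def)
  show "binomial_term n k k \<le> n ^ n"
    unfolding sum by (rule member_le_sum) (use assms in auto)
  have "(\<Sum>j\<le>n. binomial_term n k j) \<le> (\<Sum>j\<le>n. binomial_term n k k)"
    by (rule sum_mono) (use binomial_term_le_mode assms in auto)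
  then show "n ^ n \<le> (n + 1) * binomial_term n k k" unfolding sum by simp
qed

lemma scaled_bin_entropy_eq:
  fixes n k :: nat
  assumes "0 < k" "k < n"
  shows "real n * bin_entropy (real k / real n)
    = real n * log 2 n - real k * log 2 k - (real n - real k) * log 2 (real n - real k)"
proof -
  have n: "real n > 0" using assms by simp
  have compl: "1 - real k / real n = (real n - real k) / real n" using n by (simp add: field_simps)
  have log_k: "log 2 (real k / real n) = log 2 k - log 2 n"
    and log_nk: "log 2 ((real n - real k) / real n) = log 2 (real n - real k) - log 2 n"
    using assms by (simp_all add: log_divide)
  have "real n * bin_entropy (real k / real n)
      = - real k * (log 2 k - log 2 n) - (real n - real k) * (log 2 (real n - real k) - log 2 n)"
    unfolding bin_entropy_def compl log_k log_nk using n by (simp add: field_simps)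
  then show ?thesis by (simp add: algebra_simps)
qed

lemma log_binomial_bounds:
  fixes n k :: nat
  assumes "0 < k" "k < n"
  shows "log 2 (n choose k) \<le> real n * bin_entropy (real k / real n)"
    and "real n * bin_entropy (real k / real n) - log 2 (real n + 1) \<le> log 2 (n choose k)"
proof -
  have diff: "real (n - k) = real n - real k" using assms by simp
  have pos: "real (n choose k) > 0" "real n - real k > 0" using assms by simp_all
  let ?T = "real (n choose k) * real k ^ k * (real n - real k) ^ (n - k)"
  have T: "real (binomial_term n k k) = ?T"
    unfolding binomial_term_def by (simp add: diff)
  have T_pos: "?T > 0" using pos assms by simp
  have log_T: "log 2 ?T
      = log 2 (n choose k) + real k * log 2 k + (real n - real k) * log 2 (real n - real k)"
    using pos assms by (simp add: log_mult log_nat_power)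
  have T_le: "?T \<le> real n ^ n"
    using binomial_term_mode_bounds(1)[of k n] assms unfolding T[symmetric]
    by (metis of_nat_le_iff of_nat_power less_imp_le)
  have "log 2 ?T \<le> log 2 (real n ^ n)"
    by (rule log_mono) (use T_pos T_le in auto)
  then show "log 2 (n choose k) \<le> real n * bin_entropy (real k / real n)"
    unfolding scaled_bin_entropy_eq[OF assms] log_T using assms by (simp add: log_nat_power)
  have le_T: "real n ^ n \<le> (real n + 1) * ?T"
    using binomial_term_mode_bounds(2)[of k n] assms unfolding T[symmetric]
    by (metis (mono_tags) of_nat_1 of_nat_add of_nat_le_iff of_nat_mult of_nat_power less_imp_le)
  have "log 2 (real n ^ n) \<le> log 2 ((real n + 1) * ?T)"
    by (rule log_mono) (use assms le_T in auto)
  also have "\<dots> = log 2 (real n + 1) + log 2 ?T"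
    using T_pos by (simp add: log_mult_pos)
  finally show "real n * bin_entropy (real k / real n) - log 2 (real n + 1) \<le> log 2 (n choose k)"
    unfolding scaled_bin_entropy_eq[OF assms] log_T using assms by (simp add: log_nat_power)
qed

lemma bin_entropy_has_derivative:
  assumes "0 < x" "x < 1"
  shows "DERIV bin_entropy x :> log 2 (1 - x) - log 2 x"
proof -
  have "DERIV (\<lambda>x. - x * log 2 x - (1 - x) * log 2 (1 - x)) x :>
     - (1 * log 2 x + x * (1 / (ln 2 * x))) - ((-1) * log 2 (1 - x) + (1 - x) * (1 / (ln 2 * (1 - x)) * (-1)))"
    by (rule derivative_eq_intros DERIV_log refl | use assms in simp)+
  moreover have "- (1 * log 2 x + x * (1 / (ln 2 * x))) - ((-1) * log 2 (1 - x) + (1 - x) * (1 / (ln 2 * (1 - x)) * (-1)))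
     = log 2 (1 - x) - log 2 x" using assms by (simp add: field_simps)
  ultimately show ?thesis unfolding bin_entropy_def[abs_def] by simp
qed

lemma isCont_bin_entropy: "0 < x \<Longrightarrow> x < 1 \<Longrightarrow> isCont bin_entropy x"
  using bin_entropy_has_derivative DERIV_isCont by blast

lemma bin_entropy_strict_antimono:
  assumes "1/2 \<le> a" "a < b" "b < 1"
  shows "bin_entropy b < bin_entropy a"
proof (rule DERIV_neg_imp_decreasing_open[OF \<open>a < b\<close>])
  show "\<exists>y. DERIV bin_entropy x :> y \<and> y < 0" if "a < x" "x < b" for x
    using that assms bin_entropy_has_derivative[of x] by auto
  show "continuous_on {a..b} bin_entropy"
    by (rule continuous_at_imp_continuous_on) (use assms isCont_bin_entropy in force)
qed

lemma bin_entropy_antimono: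
  "1/2 \<le> a \<Longrightarrow> a \<le> b \<Longrightarrow> b < 1 \<Longrightarrow> bin_entropy b \<le> bin_entropy a"
  using bin_entropy_strict_antimono[of a b] by (cases "a = b") auto

lemma bin_entropy_nonneg:
  assumes "0 < x" "x < 1"
  shows "0 \<le> bin_entropy x"
proof -
  have "x * log 2 x \<le> 0" "(1 - x) * log 2 (1 - x) \<le> 0"
    using assms by (simp_all add: mult_nonneg_nonpos)
  then show ?thesis unfolding bin_entropy_def by linarith
qed

lemma bin_entropy_two_thirds: "bin_entropy (2/3) = log 2 3 - 2/3"
proof -
  have "log 2 (2/3) = 1 - log 2 3" "log 2 (1/3) = - log 2 3"
    by (simp_all add: log_divide)
  moreover have "(1::real) - 2/3 = 1/3" by simp
  ultimately show ?thesis unfolding bin_entropy_def by (simp add: field_simps)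
qed

lemma power_divide_powr_eq:
  fixes x y t :: real
  assumes "0 < x" "0 < y"
  shows "x ^ n / y powr t = 2 powr (real n * log 2 x - t * log 2 y)"
proof -
  have "x ^ n / y powr t = 2 powr (log 2 (x ^ n / y powr t))" using assms by simp
  also have "log 2 (x ^ n / y powr t) = real n * log 2 x - t * log 2 y"
    using assms by (simp add: log_divide log_nat_power log_powr)
  finally show ?thesis .
qed

section \<open>Limits of rates\<close>

lemma tendsto_log_Suc_over_n: "(\<lambda>n. log 2 (real n + 1) / real n) \<longlonglongrightarrow> 0"
  by real_asymp

lemma tendsto_floor_mult_over_n:
  assumes "0 \<le> \<rho>"
  shows "(\<lambda>n. real (nat \<lfloor>\<rho> * real n\<rfloor>) / real n) \<longlonglongrightarrow> \<rho>"
proof (rule real_tendsto_sandwich)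
  show "\<forall>\<^sub>F n in sequentially. \<rho> - 1 / real n \<le> real (nat \<lfloor>\<rho> * real n\<rfloor>) / real n"
    using eventually_gt_at_top[of "0::nat"]
  proof eventually_elim
    case (elim n)
    have "\<rho> * real n - 1 \<le> real (nat \<lfloor>\<rho> * real n\<rfloor>)" using assms by linarith
    then have "(\<rho> * real n - 1) / real n \<le> real (nat \<lfloor>\<rho> * real n\<rfloor>) / real n"
      by (rule divide_right_mono) simp
    then show ?case using elim by (simp add: diff_divide_distrib)
  qed
  show "\<forall>\<^sub>F n in sequentially. real (nat \<lfloor>\<rho> * real n\<rfloor>) / real n \<le> \<rho>"
    using eventually_gt_at_top[of "0::nat"]
  proof eventually_elim
    case (elim n)
    have "real (nat \<lfloor>\<rho> * real n\<rfloor>) \<le> \<rho> * real n" using assms by simp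
    then show ?case using elim by (simp add: field_simps)
  qed
  show "(\<lambda>n. \<rho> - 1 / real n) \<longlonglongrightarrow> \<rho>" by real_asymp
qed simp

lemma tendsto_log_ceiling_powr_over_n:
  assumes "0 \<le> s"
  shows "(\<lambda>n. log 2 (real (nat \<lceil>2 powr (s * real n)\<rceil>)) / real n) \<longlonglongrightarrow> s"
proof (rule real_tendsto_sandwich)
  have bounds: "s * real n \<le> log 2 (real (nat \<lceil>2 powr (s * real n)\<rceil>))
      \<and> log 2 (real (nat \<lceil>2 powr (s * real n)\<rceil>)) \<le> 1 + s * real n" for n
  proof -
    define x where "x = 2 powr (s * real n)"
    have x: "1 \<le> x" unfolding x_def using assms by (simp add: ge_one_powr_ge_zero)
    then have ceil: "real (nat \<lceil>x\<rceil>) = of_int \<lceil>x\<rceil>" "x \<le> of_int \<lceil>x\<rceil>" "of_int \<lceil>x\<rceil> \<le> 2 * x"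
      by linarith+
    have "s * real n = log 2 x" unfolding x_def by simp
    also have "\<dots> \<le> log 2 (real (nat \<lceil>x\<rceil>))" using ceil x by (intro log_mono) auto
    finally have "s * real n \<le> log 2 (real (nat \<lceil>x\<rceil>))" .
    moreover have "log 2 (real (nat \<lceil>x\<rceil>)) \<le> log 2 (2 * x)" using ceil x by (intro log_mono) auto
    moreover have "log 2 (2 * x) = 1 + s * real n" using x unfolding x_def by (simp add: log_mult_pos)
    ultimately show ?thesis unfolding x_def by simp
  qed
  show "\<forall>\<^sub>F n in sequentially. s \<le> log 2 (real (nat \<lceil>2 powr (s * real n)\<rceil>)) / real n"
    using eventually_gt_at_top[of "0::nat"] by eventually_elim (use bounds in \<open>simp add: field_simps\<close>)
  show "\<forall>\<^sub>F n in sequentially. log 2 (real (nat \<lceil>2 powr (s * real n)\<rceil>)) / real n \<le> s + 1 / real n"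
    using eventually_gt_at_top[of "0::nat"] by eventually_elim (use bounds in \<open>simp add: field_simps\<close>)
  show "(\<lambda>n. s + 1 / real n) \<longlonglongrightarrow> s" by real_asymp
qed simp

lemma tendsto_log_binomial_over_n:
  assumes "0 < \<rho>" "\<rho> < 1"
  shows "(\<lambda>n. log 2 (n choose nat \<lfloor>\<rho> * real n\<rfloor>) / real n) \<longlonglongrightarrow> bin_entropy \<rho>"
proof -
  define k where "k n = nat \<lfloor>\<rho> * real n\<rfloor>" for n
  have k_rate: "(\<lambda>n. real (k n) / real n) \<longlonglongrightarrow> \<rho>"
    unfolding k_def using assms by (intro tendsto_floor_mult_over_n) simp
  have entropy_rate: "(\<lambda>n. bin_entropy (real (k n) / real n)) \<longlonglongrightarrow> bin_entropy \<rho>"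
    using isCont_tendsto_compose[OF isCont_bin_entropy[OF assms] k_rate] .
  have k_inner: "\<forall>\<^sub>F n in sequentially. 0 < k n \<and> k n < n"
    using order_tendstoD(1)[OF k_rate assms(1)] order_tendstoD(2)[OF k_rate assms(2)]
      eventually_gt_at_top[of "0::nat"]
    by eventually_elim (auto simp: field_simps)
  show ?thesis unfolding k_def[symmetric]
  proof (rule real_tendsto_sandwich)
    show "\<forall>\<^sub>F n in sequentially.
        bin_entropy (real (k n) / real n) - log 2 (real n + 1) / real n \<le> log 2 (n choose k n) / real n"
      using k_inner
    proof eventually_elim
      case (elim n)
      then have "(real n * bin_entropy (real (k n) / real n) - log 2 (real n + 1)) / real n
          \<le> log 2 (n choose k n) / real n"
        using log_binomial_bounds(2)[of "k n" n] by (intro divide_right_mono) auto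
      with elim show ?case by (simp add: diff_divide_distrib)
    qed
    show "\<forall>\<^sub>F n in sequentially. log 2 (n choose k n) / real n \<le> bin_entropy (real (k n) / real n)"
      using k_inner
    proof eventually_elim
      case (elim n)
      then show ?case using log_binomial_bounds(1)[of "k n" n] by (simp add: divide_le_eq mult.commute)
    qed
    show "(\<lambda>n. bin_entropy (real (k n) / real n) - log 2 (real n + 1) / real n) \<longlonglongrightarrow> bin_entropy \<rho>"
      using tendsto_diff[OF entropy_rate tendsto_log_Suc_over_n] by simp
  qed (fact entropy_rate)
qed

lemma tendsto_log_min_over_n:
  fixes a b :: "nat \<Rightarrow> nat"
  assumes "\<And>n. 0 < a n" "\<And>n. 0 < b n"
    and "(\<lambda>n. log 2 (a n) / real n) \<longlonglongrightarrow> \<alpha>" "(\<lambda>n. log 2 (b n) / real n) \<longlonglongrightarrow> \<beta>"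
  shows "(\<lambda>n. log 2 (min (a n) (b n)) / real n) \<longlonglongrightarrow> min \<alpha> \<beta>"
proof -
  have "log 2 (min (a n) (b n)) = min (log 2 (a n)) (log 2 (b n))" for n
    using assms(1,2)[of n] by (simp add: min_def)
  then have "log 2 (min (a n) (b n)) / real n = min (log 2 (a n) / real n) (log 2 (b n) / real n)" for n
    by (simp add: min_divide_distrib_right)
  then show ?thesis using tendsto_min[OF assms(3,4)] by simp
qed

lemma log_div_bounds:
  fixes c g :: nat
  assumes "1 \<le> g" "g \<le> c"
  shows "log 2 c - log 2 g - 1 \<le> log 2 (c div g)" and "log 2 (c div g) \<le> log 2 c - log 2 g"
proof -
  define q where "q = c div g"
  have q: "1 \<le> q" unfolding q_def using assms by (simp add: Suc_le_eq div_greater_zero_iff)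
  have "q * g \<le> c" unfolding q_def by simp
  then have lower: "real q * real g \<le> real c" by (metis of_nat_le_iff of_nat_mult)
  have "c = q * g + c mod g" unfolding q_def by simp
  moreover have "c mod g < g" using assms by simp
  ultimately have "c < q * g + g" by linarith
  then have "c < (q + 1) * g" by (simp add: algebra_simps)
  also have "\<dots> \<le> 2 * q * g" using q by simp
  finally have upper: "real c \<le> 2 * real q * real g" by (metis of_nat_le_iff of_nat_mult of_nat_numeral less_imp_le)
  have pos: "real q > 0" "real g > 0" using q assms by auto
  have "log 2 c \<le> log 2 (2 * real q * real g)" using upper pos assms by (intro log_mono) auto
  also have "\<dots> = 1 + log 2 q + log 2 g" using pos by (simp add: log_mult_pos)
  finally show "log 2 c - log 2 g - 1 \<le> log 2 (c div g)" unfolding q_def by simp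
  have "log 2 q + log 2 g = log 2 (real q * real g)" using pos by (simp add: log_mult_pos)
  also have "\<dots> \<le> log 2 c" using lower pos by (intro log_mono) auto
  finally show "log 2 (c div g) \<le> log 2 c - log 2 g" unfolding q_def by simp
qed

lemma tendsto_log_div_over_n:
  fixes c g :: "nat \<Rightarrow> nat"
  assumes "\<And>n. 1 \<le> g n" "\<And>n. g n \<le> c n"
    and "(\<lambda>n. log 2 (c n) / real n) \<longlonglongrightarrow> \<alpha>" "(\<lambda>n. log 2 (g n) / real n) \<longlonglongrightarrow> \<beta>"
  shows "(\<lambda>n. log 2 (c n div g n) / real n) \<longlonglongrightarrow> \<alpha> - \<beta>"
proof (rule real_tendsto_sandwich)
  let ?d = "\<lambda>n. log 2 (c n) / real n - log 2 (g n) / real n"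
  have d: "?d \<longlonglongrightarrow> \<alpha> - \<beta>" using assms(3,4) by (rule tendsto_diff)
  show "(\<lambda>n. ?d n - 1 / real n) \<longlonglongrightarrow> \<alpha> - \<beta>"
    using tendsto_diff[OF d lim_const_over_n[of 1]] by simp
  show "?d \<longlonglongrightarrow> \<alpha> - \<beta>" by (fact d)
  show "\<forall>\<^sub>F n in sequentially. ?d n - 1 / real n \<le> log 2 (c n div g n) / real n"
    using log_div_bounds(1)[OF assms(1,2)]
    by (intro always_eventually allI) (simp add: divide_right_mono flip: diff_divide_distrib)
  show "\<forall>\<^sub>F n in sequentially. log 2 (c n div g n) / real n \<le> ?d n"
    using log_div_bounds(2)[OF assms(1,2)]
    by (intro always_eventually allI) (simp add: divide_right_mono flip: diff_divide_distrib)
qed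

section \<open>Counting words by Hamming weight\<close>

abbreviation words :: "'a set \<Rightarrow> nat \<Rightarrow> 'a list set" where
  "words A n \<equiv> {w. set w \<subseteq> A \<and> length w = n}"

definition hamming_weight :: "'a \<Rightarrow> 'a list \<Rightarrow> nat" where
  "hamming_weight z w = length (filter (\<lambda>c. c \<noteq> z) w)"

lemma hamming_weight_map_eq:
  "hamming_weight True (map (\<lambda>c. c = z) w) = hamming_weight z w"
  unfolding hamming_weight_def by (induction w) auto

lemma prod_list_weight:
  "prod_list (map (\<lambda>c. if c = z then 1 else x) w) = (x :: real) ^ hamming_weight z w"
  unfolding hamming_weight_def by (induction w) auto

lemma sum_words_prod_list:
  fixes f :: "'a \<Rightarrow> real"
  shows "(\<Sum>w\<in>words A n. prod_list (map f w)) = sum f A ^ n"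
proof (induction n)
  case 0
  have "words A 0 = {[]}" by auto
  then show ?case by simp
next
  case (Suc n)
  have inj: "inj_on (\<lambda>(w, a). a # w) (words A n \<times> A)" by (auto simp: inj_on_def)
  have "(\<Sum>w\<in>words A (Suc n). prod_list (map f w))
      = (\<Sum>(w, a)\<in>words A n \<times> A. f a * prod_list (map f w))"
    unfolding lists_length_Suc_eq by (subst sum.reindex[OF inj]) (simp add: split_def)
  also have "\<dots> = (\<Sum>w\<in>words A n. prod_list (map f w)) * sum f A"
    by (simp add: sum.cartesian_product[symmetric] sum_distrib_left sum_distrib_right mult.commute)
  finally show ?case using Suc by simp
qed

text \<open>Chernoff's argument: every word of \<open>V\<close> has weight \<open>\<beta>\<^bsup>wt w\<^esup> / \<beta>\<^bsup>\<tau>\<^esup> \<ge> 1\<close>,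
  and the total weight of all words factorises over the positions.\<close>

lemma card_words_weight_bound:
  fixes \<beta> \<tau> :: real
  assumes "finite A" "z \<in> A" "0 < \<beta>" "V \<subseteq> words A n"
    and weight: "\<And>w. w \<in> V \<Longrightarrow> \<beta> powr \<tau> \<le> \<beta> ^ hamming_weight z w"
  shows "real (card V) \<le> (1 + real (card A - 1) * \<beta>) ^ n / \<beta> powr \<tau>"
proof -
  let ?f = "\<lambda>c. if c = z then 1 else \<beta>"
  have fin: "finite (words A n)" using assms(1) by (rule finite_lists_length_eq)
  have "sum ?f A = 1 + (\<Sum>c\<in>A - {z}. \<beta>)"
    using assms(1,2) by (simp add: sum.remove[of A z])
  then have sum_f: "sum ?f A = 1 + real (card A - 1) * \<beta>"
    using assms(1,2) by simp
  have "real (card V) = (\<Sum>w\<in>V. 1)" by simp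
  also have "\<dots> \<le> (\<Sum>w\<in>V. \<beta> ^ hamming_weight z w / \<beta> powr \<tau>)"
    using weight assms(3) by (intro sum_mono) simp
  also have "\<dots> \<le> (\<Sum>w\<in>words A n. \<beta> ^ hamming_weight z w / \<beta> powr \<tau>)"
    using fin assms(3,4) by (intro sum_mono2) auto
  also have "\<dots> = (\<Sum>w\<in>words A n. prod_list (map ?f w)) / \<beta> powr \<tau>"
    by (simp add: prod_list_weight sum_divide_distrib)
  also have "\<dots> = (1 + real (card A - 1) * \<beta>) ^ n / \<beta> powr \<tau>"
    by (simp only: sum_words_prod_list sum_f)
  finally show ?thesis .
qed

section \<open>Codes and rates\<close>

lemma distinguishable_imp_neq: "distinguishable G x y \<Longrightarrow> x \<noteq> y"
  unfolding distinguishable_def by auto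

lemma distinguishable_empty_graph:
  assumes "length x = length y" "x \<noteq> y"
  shows "distinguishable (\<lambda>a b. False) x y"
  using assms nth_equalityI unfolding distinguishable_def by fastforce

lemma feasible_vectorE:
  assumes "feasible_vector \<Sigma> G1 G2 n m1 m2"
  obtains E where "1 \<le> m1" "1 \<le> m2"
    "\<And>a b. a < m1 \<Longrightarrow> b < m2 \<Longrightarrow> E a b \<in> words \<Sigma> n"
    "\<And>a b a' b'. a < m1 \<Longrightarrow> b < m2 \<Longrightarrow> a' < m1 \<Longrightarrow> b' < m2 \<Longrightarrow> a \<noteq> a'
      \<Longrightarrow> distinguishable G1 (E a b) (E a' b')"
    "inj_on (case_prod E) ({..<m1} \<times> {..<m2})"
proof -
  obtain E where m: "1 \<le> m1" "1 \<le> m2"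
    and words: "\<forall>a < m1. \<forall>b < m2. length (E a b) = n \<and> set (E a b) \<subseteq> \<Sigma>"
    and G1: "\<forall>a < m1. \<forall>b < m2. \<forall>a' < m1. \<forall>b' < m2. a \<noteq> a' \<longrightarrow> distinguishable G1 (E a b) (E a' b')"
    and G2: "\<forall>a < m1. \<forall>b < m2. \<forall>a' < m1. \<forall>b' < m2. b \<noteq> b' \<longrightarrow> distinguishable G2 (E a b) (E a' b')"
    using assms unfolding feasible_vector_def by (elim conjE exE)
  show thesis
  proof (rule that[OF m])
    show "E a b \<in> words \<Sigma> n" if "a < m1" "b < m2" for a b
      using words that by simp
    show "distinguishable G1 (E a b) (E a' b')"
      if "a < m1" "b < m2" "a' < m1" "b' < m2" "a \<noteq> a'" for a b a' b'
      using G1 that by simp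
    show "inj_on (case_prod E) ({..<m1} \<times> {..<m2})"
    proof (rule inj_onI, clarify)
      fix a b a' b' assume ab: "a < m1" "b < m2" "a' < m1" "b' < m2" and eq: "E a b = E a' b'"
      have "\<not> distinguishable G (E a b) (E a' b')" for G
        using eq distinguishable_imp_neq by blast
      then show "a = a' \<and> b = b'" using G1 G2 ab by blast
    qed
  qed
qed

lemma feasible_vector_card_le:
  assumes "finite \<Sigma>" "feasible_vector \<Sigma> G1 G2 n m1 m2"
  shows "m1 * m2 \<le> card \<Sigma> ^ n"
proof -
  obtain E where words: "\<And>a b. a < m1 \<Longrightarrow> b < m2 \<Longrightarrow> E a b \<in> words \<Sigma> n"
    and inj: "inj_on (case_prod E) ({..<m1} \<times> {..<m2})"
    using feasible_vectorE[OF assms(2)] by metis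
  have "m1 * m2 = card ({..<m1} \<times> {..<m2})" by simp
  also have "\<dots> \<le> card (words \<Sigma> n)"
  proof (rule card_inj_on_le[OF inj])
    show "case_prod E ` ({..<m1} \<times> {..<m2}) \<subseteq> words \<Sigma> n" using words by fastforce
  qed (rule finite_lists_length_eq[OF assms(1)])
  also have "\<dots> = card \<Sigma> ^ n" using assms(1) by (rule card_lists_length_eq)
  finally show ?thesis .
qed

text \<open>User 1's message \<open>a\<^sub>1\<close> selects the block of the \<open>g\<close> indices \<open>p\<close> starting at
  \<open>a\<^sub>1 g\<close>; user 2's message selects the index inside the block together with \<open>l\<close>.\<close>

lemma feasible_vector_blockwise:
  fixes W :: "nat \<Rightarrow> nat \<Rightarrow> 'a list"
  assumes words: "\<And>p l. p < C \<Longrightarrow> l < L \<Longrightarrow> W p l \<in> words \<Sigma> n"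
    and G1: "\<And>p l p' l'. p < C \<Longrightarrow> l < L \<Longrightarrow> p' < C \<Longrightarrow> l' < L \<Longrightarrow> p \<noteq> p'
      \<Longrightarrow> distinguishable G1 (W p l) (W p' l')"
    and G2: "\<And>p l p' l'. p < C \<Longrightarrow> l < L \<Longrightarrow> p' < C \<Longrightarrow> l' < L \<Longrightarrow> (p, l) \<noteq> (p', l')
      \<Longrightarrow> distinguishable G2 (W p l) (W p' l')"
    and "1 \<le> g" "g \<le> C" "1 \<le> L"
  shows "feasible_vector \<Sigma> G1 G2 n (C div g) (g * L)"
proof -
  define p where "p a1 a2 = a1 * g + a2 div L" for a1 a2
  have div_lt: "a2 div L < g" if "a2 < g * L" for a2
    using that by (simp add: less_mult_imp_div_less)
  have p_lt: "p a1 a2 < C" if "a1 < C div g" "a2 < g * L" for a1 a2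
  proof -
    have "p a1 a2 < (a1 + 1) * g" unfolding p_def using div_lt[OF that(2)] by simp
    also have "\<dots> \<le> C div g * g" using that(1) by (intro mult_le_mono1) simp
    also have "\<dots> \<le> C" by simp
    finally show ?thesis .
  qed
  have p_div: "p a1 a2 div g = a1" and p_mod: "p a1 a2 mod g = a2 div L" if "a2 < g * L" for a1 a2
    using div_lt[OF that] \<open>1 \<le> g\<close> unfolding p_def by auto
  have l_lt: "a2 mod L < L" for a2 using \<open>1 \<le> L\<close> by simp
  show ?thesis unfolding feasible_vector_def
  proof (intro conjI exI[of _ "\<lambda>a1 a2. W (p a1 a2) (a2 mod L)"] allI impI)
    show "1 \<le> C div g" using assms(4,5) by (simp add: Suc_le_eq div_greater_zero_iff)
    show "1 \<le> g * L" using assms(4,6) by simp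
    fix a1 a2 a1' a2' assume a: "a1 < C div g" "a2 < g * L"
    show "length (W (p a1 a2) (a2 mod L)) = n" "set (W (p a1 a2) (a2 mod L)) \<subseteq> \<Sigma>"
      using words[OF p_lt[OF a] l_lt] by auto
    assume a': "a1' < C div g" "a2' < g * L"
    show "distinguishable G1 (W (p a1 a2) (a2 mod L)) (W (p a1' a2') (a2' mod L))" if "a1 \<noteq> a1'"
      using that p_div[OF a(2)] p_div[OF a'(2)] by (intro G1 p_lt a a' l_lt) metis
    show "distinguishable G2 (W (p a1 a2) (a2 mod L)) (W (p a1' a2') (a2' mod L))" if "a2 \<noteq> a2'"
    proof (intro G2 p_lt a a' l_lt notI)
      assume "(p a1 a2, a2 mod L) = (p a1' a2', a2' mod L)"
      then have "a2 div L = a2' div L" "a2 mod L = a2' mod L"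
        using p_mod[OF a(2), of a1] p_mod[OF a'(2), of a1'] by auto
      then show False using that by (metis div_mult_mod_eq)
    qed
  qed
qed

lemma feasible_rateE:
  assumes "feasible_rate \<Sigma> G1 G2 R1 R2"
  obtains nn m1 m2 where "filterlim nn at_top sequentially"
    "\<And>k. feasible_vector \<Sigma> G1 G2 (nn k) (m1 k) (m2 k)"
    "(\<lambda>k. log 2 (m1 k) / real (nn k)) \<longlonglongrightarrow> R1" "(\<lambda>k. log 2 (m2 k) / real (nn k)) \<longlonglongrightarrow> R2"
  using assms unfolding feasible_rate_def by blast

lemma feasible_vector_log_sum_le:
  assumes "finite \<Sigma>" "\<Sigma> \<noteq> {}" "feasible_vector \<Sigma> G1 G2 n m1 m2"
  shows "log 2 m1 + log 2 m2 \<le> real n * log 2 (card \<Sigma>)"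
proof -
  have m: "1 \<le> m1" "1 \<le> m2" using feasible_vectorE[OF assms(3)] by metis+
  have "real m1 * real m2 \<le> real (card \<Sigma>) ^ n"
    using feasible_vector_card_le[OF assms(1,3)] by (metis of_nat_le_iff of_nat_mult of_nat_power)
  then have "log 2 (real m1 * real m2) \<le> log 2 (real (card \<Sigma>) ^ n)"
    using m by (intro log_mono) auto
  then show ?thesis using m assms(1,2) by (simp add: log_mult_pos log_nat_power card_gt_0_iff)
qed

lemma feasible_rate_sum_le:
  assumes "finite \<Sigma>" "\<Sigma> \<noteq> {}" "feasible_rate \<Sigma> G1 G2 R1 R2"
  shows "R1 + R2 \<le> log 2 (card \<Sigma>)"
proof -
  obtain nn m1 m2 where nn: "filterlim nn at_top sequentially"
    and feasible: "\<And>k. feasible_vector \<Sigma> G1 G2 (nn k) (m1 k) (m2 k)"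
    and R1: "(\<lambda>k. log 2 (m1 k) / real (nn k)) \<longlonglongrightarrow> R1"
    and R2: "(\<lambda>k. log 2 (m2 k) / real (nn k)) \<longlonglongrightarrow> R2"
    using feasible_rateE[OF assms(3)] by blast
  have "\<forall>\<^sub>F k in sequentially. 1 \<le> nn k" using nn by (simp add: filterlim_at_top)
  then have "\<forall>\<^sub>F k in sequentially.
      log 2 (m1 k) / real (nn k) + log 2 (m2 k) / real (nn k) \<le> log 2 (card \<Sigma>)"
  proof eventually_elim
    case (elim k)
    then show ?case using feasible_vector_log_sum_le[OF assms(1,2) feasible[of k]]
      by (simp add: divide_le_eq mult.commute flip: add_divide_distrib)
  qed
  with tendsto_add[OF R1 R2] show ?thesis by (intro tendsto_le[OF _ tendsto_const]) auto
qed

lemma feasible_rate_from_binomial_codes: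
  assumes codes: "\<And>n k g. k \<le> n \<Longrightarrow> 1 \<le> g \<Longrightarrow> g \<le> n choose k
      \<Longrightarrow> feasible_vector \<Sigma> G1 G2 n ((n choose k) div g) (g * 2 ^ k)"
    and \<rho>: "0 < \<rho>" "\<rho> < 1" and s: "0 \<le> s" "s \<le> bin_entropy \<rho>"
  shows "feasible_rate \<Sigma> G1 G2 (bin_entropy \<rho> - s) (\<rho> + s)"
proof -
  define k where "k n = nat \<lfloor>\<rho> * real n\<rfloor>" for n
  define c where "c n = nat \<lceil>2 powr (s * real n)\<rceil>" for n
  \<comment> \<open>the cap leaves user 1 at least one message and, as \<open>s \<le> H \<rho>\<close>, does not change the rate\<close>
  define g where "g n = min (n choose k n) (c n)" for n
  have k_le: "k n \<le> n" for n
  proof -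
    have "\<rho> * real n \<le> real n" using \<rho> mult_left_le_one_le[of "real n" \<rho>] by simp
    then show ?thesis unfolding k_def by linarith
  qed
  have c_pos: "0 < c n" for n
    unfolding c_def using s by (simp add: ge_one_powr_ge_zero)
  have g: "1 \<le> g n" "g n \<le> n choose k n" for n
    unfolding g_def using k_le[of n] c_pos[of n] by (simp_all add: Suc_le_eq)
  have k_rate: "(\<lambda>n. real (k n) / real n) \<longlonglongrightarrow> \<rho>"
    unfolding k_def using \<rho> by (intro tendsto_floor_mult_over_n) simp
  have C_rate: "(\<lambda>n. log 2 (n choose k n) / real n) \<longlonglongrightarrow> bin_entropy \<rho>"
    unfolding k_def using \<rho> by (rule tendsto_log_binomial_over_n)
  have c_rate: "(\<lambda>n. log 2 (c n) / real n) \<longlonglongrightarrow> s"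
    unfolding c_def using s(1) by (rule tendsto_log_ceiling_powr_over_n)
  have "0 < n choose k n" for n using k_le[of n] by simp
  then have "(\<lambda>n. log 2 (g n) / real n) \<longlonglongrightarrow> min (bin_entropy \<rho>) s"
    unfolding g_def using c_pos C_rate c_rate by (rule tendsto_log_min_over_n)
  then have g_rate: "(\<lambda>n. log 2 (g n) / real n) \<longlonglongrightarrow> s" using s by (simp add: min_absorb2)
  have "log 2 (g n * 2 ^ k n) / real n = real (k n) / real n + log 2 (g n) / real n" for n
    using g(1)[of n] by (simp add: log_mult_pos log_nat_power add_divide_distrib)
  then have m2_rate: "(\<lambda>n. log 2 (g n * 2 ^ k n) / real n) \<longlonglongrightarrow> \<rho> + s"
    using tendsto_add[OF k_rate g_rate] by simp
  have m1_rate: "(\<lambda>n. log 2 ((n choose k n) div g n) / real n) \<longlonglongrightarrow> bin_entropy \<rho> - s"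
    using g C_rate g_rate by (rule tendsto_log_div_over_n)
  show ?thesis unfolding feasible_rate_def
    by (intro exI[of _ "\<lambda>n. n"] exI[of _ "\<lambda>n. (n choose k n) div g n"] exI[of _ "\<lambda>n. g n * 2 ^ k n"]
        conjI allI filterlim_ident codes k_le g m1_rate m2_rate)
qed

section \<open>A confusable pair in a three-letter alphabet\<close>

locale three_letters =
  fixes \<sigma>0 \<sigma>1 \<sigma>2 :: 'a
  assumes distinct: "\<sigma>0 \<noteq> \<sigma>1" "\<sigma>0 \<noteq> \<sigma>2" "\<sigma>1 \<noteq> \<sigma>2"
begin

abbreviation "\<Sigma> \<equiv> {\<sigma>0, \<sigma>1, \<sigma>2}"
abbreviation "G1 \<equiv> \<lambda>a b. (a = \<sigma>0 \<and> b = \<sigma>1) \<or> (a = \<sigma>1 \<and> b = \<sigma>0)"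
abbreviation "G2 \<equiv> \<lambda>(a::'a) (b::'a). False"

lemma G1_distinguishable_imp_pattern_neq:
  assumes "distinguishable G1 x y" "set x \<subseteq> \<Sigma>" "set y \<subseteq> \<Sigma>"
  shows "map (\<lambda>c. c = \<sigma>2) x \<noteq> map (\<lambda>c. c = \<sigma>2) y"
proof -
  obtain t where t: "t < length x" "t < length y" "x ! t \<noteq> y ! t" "\<not> G1 (x ! t) (y ! t)"
    using assms(1) unfolding distinguishable_def by blast
  have "x ! t \<in> \<Sigma>" "y ! t \<in> \<Sigma>" using t(1,2) assms(2,3) nth_mem by blast+
  then have "(x ! t = \<sigma>2) \<noteq> (y ! t = \<sigma>2)" using t(3,4) distinct by auto
  then have "map (\<lambda>c. c = \<sigma>2) x ! t \<noteq> map (\<lambda>c. c = \<sigma>2) y ! t" using t(1,2) by simp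
  then show ?thesis by metis
qed

lemma card_heavy_messages_le:
  fixes \<mu> \<tau> :: real
  assumes words: "\<And>a b. a < m1 \<Longrightarrow> b < m2 \<Longrightarrow> E a b \<in> words \<Sigma> n"
    and G1: "\<And>a b a' b'. a < m1 \<Longrightarrow> b < m2 \<Longrightarrow> a' < m1 \<Longrightarrow> b' < m2 \<Longrightarrow> a \<noteq> a'
      \<Longrightarrow> distinguishable G1 (E a b) (E a' b')"
    and "1 \<le> \<mu>"
  shows "real (card {a. a < m1 \<and> (\<exists>b<m2. \<tau> \<le> real (hamming_weight \<sigma>2 (E a b)))}) \<le> (1 + \<mu>) ^ n / \<mu> powr \<tau>"
proof -
  define heavy where "heavy = {a. a < m1 \<and> (\<exists>b<m2. \<tau> \<le> real (hamming_weight \<sigma>2 (E a b)))}"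
  have "\<forall>a\<in>heavy. \<exists>b. b < m2 \<and> \<tau> \<le> real (hamming_weight \<sigma>2 (E a b))"
    unfolding heavy_def by blast
  from bchoice[OF this] obtain pick
    where pick: "\<forall>a\<in>heavy. pick a < m2 \<and> \<tau> \<le> real (hamming_weight \<sigma>2 (E a (pick a)))"
    by blast
  have heavy_lt: "a < m1" if "a \<in> heavy" for a using that unfolding heavy_def by blast
  define pattern where "pattern a = map (\<lambda>c. c = \<sigma>2) (E a (pick a))" for a
  have "inj_on pattern heavy"
  proof (rule inj_onI, rule ccontr)
    fix a a' assume a: "a \<in> heavy" "a' \<in> heavy" and eq: "pattern a = pattern a'" and "a \<noteq> a'"
    then have "distinguishable G1 (E a (pick a)) (E a' (pick a'))"
      using pick heavy_lt by (intro G1) auto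
    moreover have "set (E a (pick a)) \<subseteq> \<Sigma>" "set (E a' (pick a')) \<subseteq> \<Sigma>"
      using words pick heavy_lt a by blast+
    ultimately show False
      using G1_distinguishable_imp_pattern_neq eq unfolding pattern_def by blast
  qed
  then have "card heavy = card (pattern ` heavy)" by (simp add: card_image)
  also have "real \<dots> \<le> (1 + real (card (UNIV :: bool set) - 1) * \<mu>) ^ n / \<mu> powr \<tau>"
  proof (rule card_words_weight_bound)
    show "pattern ` heavy \<subseteq> words UNIV n"
      using words pick heavy_lt unfolding pattern_def by fastforce
    show "\<mu> powr \<tau> \<le> \<mu> ^ hamming_weight True w" if w: "w \<in> pattern ` heavy" for w
    proof -
      obtain a where a: "a \<in> heavy" "w = pattern a" using w by blast
      then have "\<tau> \<le> real (hamming_weight True w)"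
        using pick[rule_format, OF a(1)] by (simp add: pattern_def hamming_weight_map_eq)
      then have "\<mu> powr \<tau> \<le> \<mu> powr real (hamming_weight True w)"
        using \<open>1 \<le> \<mu>\<close> by (rule powr_mono)
      then show ?thesis using \<open>1 \<le> \<mu>\<close> by (simp add: powr_realpow)
    qed
  qed (use \<open>1 \<le> \<mu>\<close> in auto)
  finally show ?thesis unfolding heavy_def by simp
qed

lemma card_light_messages_le:
  fixes \<beta> \<tau> :: real
  assumes words: "\<And>a b. a < m1 \<Longrightarrow> b < m2 \<Longrightarrow> E a b \<in> words \<Sigma> n"
    and inj: "inj_on (case_prod E) ({..<m1} \<times> {..<m2})"
    and "0 < \<beta>" "\<beta> \<le> 1"
  shows "real (card {a. a < m1 \<and> (\<forall>b<m2. real (hamming_weight \<sigma>2 (E a b)) < \<tau>)}) * real m2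
    \<le> (1 + 2 * \<beta>) ^ n / \<beta> powr \<tau>"
proof -
  define light where "light = {a. a < m1 \<and> (\<forall>b<m2. real (hamming_weight \<sigma>2 (E a b)) < \<tau>)}"
  have light_sub: "light \<times> {..<m2} \<subseteq> {..<m1} \<times> {..<m2}" unfolding light_def by auto
  have "card light * m2 = card (case_prod E ` (light \<times> {..<m2}))"
    using inj_on_subset[OF inj light_sub] by (simp add: card_image card_cartesian_product)
  also have "real \<dots> \<le> (1 + real (card \<Sigma> - 1) * \<beta>) ^ n / \<beta> powr \<tau>"
  proof (rule card_words_weight_bound)
    show "case_prod E ` (light \<times> {..<m2}) \<subseteq> words \<Sigma> n"
      using words unfolding light_def by fastforce
    show "\<beta> powr \<tau> \<le> \<beta> ^ hamming_weight \<sigma>2 w" if "w \<in> case_prod E ` (light \<times> {..<m2})" for w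
    proof -
      have "real (hamming_weight \<sigma>2 w) \<le> \<tau>" using that unfolding light_def by fastforce
      then have "\<beta> powr \<tau> \<le> \<beta> powr real (hamming_weight \<sigma>2 w)"
        using assms(3,4) by (intro powr_mono') auto
      then show ?thesis using assms(3) by (simp add: powr_realpow)
    qed
  qed (use assms(3) in auto)
  also have "card \<Sigma> - 1 = 2" using distinct by simp
  finally show ?thesis unfolding light_def by simp
qed

lemma feasible_vector_user1_le:
  assumes "feasible_vector \<Sigma> G1 G2 n m1 m2" "1 \<le> \<mu>" "0 < \<beta>" "\<beta> \<le> 1"
  shows "real m1 \<le> (1 + \<mu>) ^ n / \<mu> powr \<tau> + (1 + 2 * \<beta>) ^ n / \<beta> powr \<tau> / real m2"
proof -
  obtain E where m: "1 \<le> m1" "1 \<le> m2"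
    and words: "\<And>a b. a < m1 \<Longrightarrow> b < m2 \<Longrightarrow> E a b \<in> words \<Sigma> n"
    and G1: "\<And>a b a' b'. a < m1 \<Longrightarrow> b < m2 \<Longrightarrow> a' < m1 \<Longrightarrow> b' < m2 \<Longrightarrow> a \<noteq> a'
      \<Longrightarrow> distinguishable G1 (E a b) (E a' b')"
    and inj: "inj_on (case_prod E) ({..<m1} \<times> {..<m2})"
    using feasible_vectorE[OF assms(1)] by blast
  let ?heavy = "{a. a < m1 \<and> (\<exists>b<m2. \<tau> \<le> real (hamming_weight \<sigma>2 (E a b)))}"
  let ?light = "{a. a < m1 \<and> (\<forall>b<m2. real (hamming_weight \<sigma>2 (E a b)) < \<tau>)}"
  have split: "?heavy \<union> ?light = {..<m1}" by (auto simp: not_le)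
  have "m1 \<le> card ?heavy + card ?light"
    using card_Un_le[of ?heavy ?light] unfolding split by simp
  then have "real m1 \<le> real (card ?heavy) + real (card ?light)" by linarith
  moreover have "real (card ?light) \<le> (1 + 2 * \<beta>) ^ n / \<beta> powr \<tau> / real m2"
    using card_light_messages_le[OF words inj assms(3,4), of \<tau>] m(2)
    by (subst pos_le_divide_eq) simp_all
  moreover have "real (card ?heavy) \<le> (1 + \<mu>) ^ n / \<mu> powr \<tau>"
    by (rule card_heavy_messages_le[OF words G1 assms(2)])
  ultimately show ?thesis by linarith
qed

lemma feasible_vector_user1_entropy_le:
  assumes "feasible_vector \<Sigma> G1 G2 n m1 m2" "1/2 \<le> \<rho>" "\<rho> \<le> 2/3"
  shows "real m1 \<le> 2 powr (real n * bin_entropy \<rho>) + 2 powr (real n * (bin_entropy \<rho> + \<rho>)) / real m2"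
proof -
  \<comment> \<open>the minimisers of the two Chernoff bounds at threshold \<open>\<rho>n\<close>\<close>
  define \<mu> where "\<mu> = \<rho> / (1 - \<rho>)"
  define \<beta> where "\<beta> = \<rho> / (2 * (1 - \<rho>))"
  have \<rho>: "0 < \<rho>" "0 < 1 - \<rho>" using assms(2,3) by auto
  have \<mu>: "1 \<le> \<mu>" unfolding \<mu>_def using assms(2) \<rho> by (simp add: field_simps)
  have \<beta>: "0 < \<beta>" "\<beta> \<le> 1" unfolding \<beta>_def using assms(3) \<rho> by (simp_all add: field_simps)
  have sums: "1 + \<mu> = 1 / (1 - \<rho>)" "1 + 2 * \<beta> = 1 / (1 - \<rho>)"
    unfolding \<mu>_def \<beta>_def using \<rho> by (simp_all add: field_simps)
  have log_sum: "log 2 (1 / (1 - \<rho>)) = - log 2 (1 - \<rho>)" using \<rho> by (simp add: log_divide)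
  have log_\<mu>: "log 2 \<mu> = log 2 \<rho> - log 2 (1 - \<rho>)" unfolding \<mu>_def using \<rho> by (simp add: log_divide)
  have "log 2 (2 * (1 - \<rho>)) = 1 + log 2 (1 - \<rho>)" using \<rho> by (subst log_mult_pos) auto
  then have log_\<beta>: "log 2 \<beta> = log 2 \<rho> - 1 - log 2 (1 - \<rho>)"
    unfolding \<beta>_def using \<rho> by (simp add: log_divide_pos)
  have "(1 + \<mu>) ^ n / \<mu> powr (\<rho> * real n) = 2 powr (real n * bin_entropy \<rho>)"
    using \<mu> \<rho> by (subst power_divide_powr_eq)
      (simp_all add: sums log_sum log_\<mu>, simp add: bin_entropy_def algebra_simps)
  moreover have "(1 + 2 * \<beta>) ^ n / \<beta> powr (\<rho> * real n) = 2 powr (real n * (bin_entropy \<rho> + \<rho>))"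
    using \<beta> \<rho> by (subst power_divide_powr_eq)
      (simp_all add: sums log_sum log_\<beta>, simp add: bin_entropy_def algebra_simps)
  ultimately show ?thesis
    using feasible_vector_user1_le[OF assms(1) \<mu> \<beta>, of "\<rho> * real n"] by simp
qed

lemma feasible_vector_user1_log_le:
  assumes "feasible_vector \<Sigma> G1 G2 n m1 m2" "1/2 \<le> \<rho>" "\<rho> \<le> 2/3"
  shows "log 2 m1 \<le> 1 + max (real n * bin_entropy \<rho>) (real n * (bin_entropy \<rho> + \<rho>) - log 2 m2)"
proof -
  define X where "X = 2 powr (real n * bin_entropy \<rho>)"
  define Y where "Y = 2 powr (real n * (bin_entropy \<rho> + \<rho>)) / real m2"
  have m: "1 \<le> m1" "1 \<le> m2" using feasible_vectorE[OF assms(1)] by metis+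
  then have XY: "0 < X" "0 < Y" unfolding X_def Y_def by auto
  have "real m1 \<le> X + Y"
    unfolding X_def Y_def using assms by (rule feasible_vector_user1_entropy_le)
  also have "\<dots> \<le> 2 * max X Y" by simp
  finally have "log 2 m1 \<le> log 2 (2 * max X Y)" using m by (intro log_mono) auto
  also have "\<dots> = 1 + max (log 2 X) (log 2 Y)" using XY by (simp add: log_mult_pos max_def)
  finally show ?thesis using m unfolding X_def Y_def by (simp add: log_divide)
qed

lemma feasible_rate_user1_le:
  assumes "feasible_rate \<Sigma> G1 G2 R1 R2" "1/2 \<le> \<rho>" "\<rho> \<le> 2/3"
  shows "R1 \<le> max (bin_entropy \<rho>) (bin_entropy \<rho> + \<rho> - R2)"
proof -
  let ?H = "bin_entropy \<rho>"
  obtain nn m1 m2 where nn: "filterlim nn at_top sequentially"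
    and feasible: "\<And>k. feasible_vector \<Sigma> G1 G2 (nn k) (m1 k) (m2 k)"
    and R1: "(\<lambda>k. log 2 (m1 k) / real (nn k)) \<longlonglongrightarrow> R1"
    and R2: "(\<lambda>k. log 2 (m2 k) / real (nn k)) \<longlonglongrightarrow> R2"
    using feasible_rateE[OF assms(1)] by blast
  have "\<forall>\<^sub>F k in sequentially. 1 \<le> nn k" using nn by (simp add: filterlim_at_top)
  then have "\<forall>\<^sub>F k in sequentially. log 2 (m1 k) / real (nn k)
      \<le> 1 / real (nn k) + max ?H (?H + \<rho> - log 2 (m2 k) / real (nn k))"
  proof eventually_elim
    case (elim k)
    then have "max (real (nn k) * ?H) (real (nn k) * (?H + \<rho>) - log 2 (m2 k))
        = real (nn k) * max ?H (?H + \<rho> - log 2 (m2 k) / real (nn k))"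
      by (simp add: max_mult_distrib_left algebra_simps)
    then show ?case using feasible_vector_user1_log_le[OF feasible[of k] assms(2,3)] elim
      by (simp add: divide_le_eq algebra_simps)
  qed
  moreover have "(\<lambda>k. 1 / real (nn k) + max ?H (?H + \<rho> - log 2 (m2 k) / real (nn k)))
      \<longlonglongrightarrow> 0 + max ?H (?H + \<rho> - R2)"
  proof (intro tendsto_intros R2)
    show "(\<lambda>k. 1 / real (nn k)) \<longlonglongrightarrow> 0"
      using filterlim_compose[OF filterlim_real_sequentially nn] tendsto_inverse_0_at_top
      by (simp add: inverse_eq_divide[symmetric]) blast
  qed
  ultimately show ?thesis by (intro tendsto_le[OF _ _ R1]) auto
qed

text \<open>Outside its support \<open>P\<close> a pattern word carries \<open>\<sigma>\<^sub>2\<close>, so user 1 sees the support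
  but not the labels \<open>f\<close>, which range over the pair \<open>\<sigma>\<^sub>0, \<sigma>\<^sub>1\<close> he confuses.\<close>

definition pattern_word :: "nat \<Rightarrow> nat set \<Rightarrow> (nat \<Rightarrow> 'a) \<Rightarrow> 'a list" where
  "pattern_word n P f = map (\<lambda>i. if i \<in> P then f i else \<sigma>2) [0..<n]"

lemma pattern_word_in_words: "f \<in> P \<rightarrow>\<^sub>E {\<sigma>0, \<sigma>1} \<Longrightarrow> pattern_word n P f \<in> words \<Sigma> n"
  unfolding pattern_word_def by auto

lemma nth_pattern_word: "i < n \<Longrightarrow> pattern_word n P f ! i = (if i \<in> P then f i else \<sigma>2)"
  unfolding pattern_word_def by simp

lemma pattern_word_support:
  assumes "P \<subseteq> {..<n}" "f \<in> P \<rightarrow>\<^sub>E {\<sigma>0, \<sigma>1}"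
  shows "P = {i. i < n \<and> pattern_word n P f ! i \<noteq> \<sigma>2}"
  using assms distinct by (fastforce simp: nth_pattern_word)

lemma pattern_word_inject:
  assumes "P \<subseteq> {..<n}" "P' \<subseteq> {..<n}" "f \<in> P \<rightarrow>\<^sub>E {\<sigma>0, \<sigma>1}" "f' \<in> P' \<rightarrow>\<^sub>E {\<sigma>0, \<sigma>1}"
    and eq: "pattern_word n P f = pattern_word n P' f'"
  shows "P = P'" "f = f'"
proof -
  show "P = P'"
    using pattern_word_support[OF assms(1,3)] pattern_word_support[OF assms(2,4)] eq by simp
  show "f = f'"
  proof (rule PiE_ext[OF assms(3)])
    show "f' \<in> P \<rightarrow>\<^sub>E {\<sigma>0, \<sigma>1}" using assms(4) \<open>P = P'\<close> by simp
    show "f i = f' i" if "i \<in> P" for i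
      using that assms(1) eq \<open>P = P'\<close> nth_pattern_word[of i n] by (metis lessThan_iff subsetD)
  qed
qed

lemma pattern_word_G1_distinguishable:
  assumes "P \<subseteq> {..<n}" "P' \<subseteq> {..<n}" "f \<in> P \<rightarrow>\<^sub>E {\<sigma>0, \<sigma>1}" "f' \<in> P' \<rightarrow>\<^sub>E {\<sigma>0, \<sigma>1}" "P \<noteq> P'"
  shows "distinguishable G1 (pattern_word n P f) (pattern_word n P' f')"
proof -
  obtain i where i: "i \<in> P \<longleftrightarrow> i \<notin> P'" using \<open>P \<noteq> P'\<close> by blast
  then have "i < n" using assms(1,2) by auto
  moreover have "pattern_word n P f ! i \<noteq> pattern_word n P' f' ! i
      \<and> \<not> G1 (pattern_word n P f ! i) (pattern_word n P' f' ! i)"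
    using i \<open>i < n\<close> assms(3,4) distinct by (auto simp: nth_pattern_word)
  moreover have "length (pattern_word n P f) = n" "length (pattern_word n P' f') = n"
    by (simp_all add: pattern_word_def)
  ultimately show ?thesis unfolding distinguishable_def by (intro exI[of _ i]) simp
qed

lemma ex_bij_betw_labellings:
  assumes "finite P" "card P = k"
  shows "\<exists>h. bij_betw h {0..<(2::nat) ^ k} (P \<rightarrow>\<^sub>E {\<sigma>0, \<sigma>1})"
proof -
  have "finite (P \<rightarrow>\<^sub>E {\<sigma>0, \<sigma>1})" and card: "card (P \<rightarrow>\<^sub>E {\<sigma>0, \<sigma>1}) = 2 ^ k"
    using assms distinct by (simp_all add: finite_PiE card_PiE numeral_2_eq_2)
  from ex_bij_betw_nat_finite[OF this(1)] show ?thesis unfolding card .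
qed

lemma pattern_word_enumeration:
  obtains W :: "nat \<Rightarrow> nat \<Rightarrow> 'a list"
  where "\<And>p l. p < n choose k \<Longrightarrow> l < 2 ^ k \<Longrightarrow> W p l \<in> words \<Sigma> n"
    "\<And>p l p' l'. p < n choose k \<Longrightarrow> l < 2 ^ k \<Longrightarrow> p' < n choose k \<Longrightarrow> l' < 2 ^ k \<Longrightarrow> p \<noteq> p'
      \<Longrightarrow> distinguishable G1 (W p l) (W p' l')"
    "\<And>p l p' l'. p < n choose k \<Longrightarrow> l < 2 ^ k \<Longrightarrow> p' < n choose k \<Longrightarrow> l' < 2 ^ k
      \<Longrightarrow> W p l = W p' l' \<Longrightarrow> p = p' \<and> l = l'"
proof -
  define supports where "supports = {P. P \<subseteq> {..<n} \<and> card P = k}"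
  have "finite supports" "card supports = n choose k"
    unfolding supports_def using n_subsets[of "{..<n}" k] by (auto intro: finite_subset)
  then obtain supp where supp: "bij_betw supp {0..<n choose k} supports"
    using ex_bij_betw_nat_finite by metis
  have "\<forall>P\<in>supports. \<exists>h. bij_betw h {0..<(2::nat) ^ k} (P \<rightarrow>\<^sub>E {\<sigma>0, \<sigma>1})"
    unfolding supports_def by (auto intro: ex_bij_betw_labellings finite_subset)
  from bchoice[OF this] obtain label
    where label: "\<forall>P\<in>supports. bij_betw (label P) {0..<(2::nat) ^ k} (P \<rightarrow>\<^sub>E {\<sigma>0, \<sigma>1})"
    by blast
  have supp_mem: "supp p \<in> supports" if "p < n choose k" for p
    using bij_betwE[OF supp] that by simp
  have supp_in: "supp p \<subseteq> {..<n}" if "p < n choose k" for p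
    using supp_mem[OF that] unfolding supports_def by auto
  have label_in: "label (supp p) l \<in> supp p \<rightarrow>\<^sub>E {\<sigma>0, \<sigma>1}" if "p < n choose k" "l < 2 ^ k" for p l
    using bij_betwE[OF label[rule_format, OF supp_mem[OF that(1)]]] that(2) by simp
  have supp_inj: "supp p = supp p' \<Longrightarrow> p = p'" if "p < n choose k" "p' < n choose k" for p p'
    using inj_onD[OF bij_betw_imp_inj_on[OF supp], of p p'] that by simp
  define W where "W p l = pattern_word n (supp p) (label (supp p) l)" for p l
  show thesis
  proof (rule that[of W])
    show "W p l \<in> words \<Sigma> n" if "p < n choose k" "l < 2 ^ k" for p l
      unfolding W_def using label_in[OF that] by (rule pattern_word_in_words)
    show "distinguishable G1 (W p l) (W p' l')"
      if "p < n choose k" "l < 2 ^ k" "p' < n choose k" "l' < 2 ^ k" "p \<noteq> p'" for p l p' l'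
      unfolding W_def using supp_inj[OF that(1,3)] that(5)
      by (intro pattern_word_G1_distinguishable supp_in label_in that(1-4)) blast
    show "p = p' \<and> l = l'"
      if "p < n choose k" "l < 2 ^ k" "p' < n choose k" "l' < 2 ^ k" "W p l = W p' l'" for p l p' l'
    proof
      note inject = pattern_word_inject[OF supp_in[OF that(1)] supp_in[OF that(3)]
          label_in[OF that(1,2)] label_in[OF that(3,4)] that(5)[unfolded W_def]]
      show "p = p'" using supp_inj[OF that(1,3) inject(1)] .
      have "inj_on (label (supp p)) {0..<2 ^ k}"
        using bij_betw_imp_inj_on[OF label[rule_format, OF supp_mem[OF that(1)]]] .
      then show "l = l'" using inject(2) \<open>p = p'\<close> that(2,4) by (simp add: inj_on_eq_iff)
    qed
  qed
qed

lemma feasible_vector_patterns: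
  assumes "1 \<le> g" "g \<le> n choose k"
  shows "feasible_vector \<Sigma> G1 G2 n ((n choose k) div g) (g * 2 ^ k)"
proof -
  obtain W :: "nat \<Rightarrow> nat \<Rightarrow> 'a list"
    where words: "\<And>p l. p < n choose k \<Longrightarrow> l < 2 ^ k \<Longrightarrow> W p l \<in> words \<Sigma> n"
    and G1: "\<And>p l p' l'. p < n choose k \<Longrightarrow> l < 2 ^ k \<Longrightarrow> p' < n choose k \<Longrightarrow> l' < 2 ^ k \<Longrightarrow> p \<noteq> p'
      \<Longrightarrow> distinguishable G1 (W p l) (W p' l')"
    and inj: "\<And>p l p' l'. p < n choose k \<Longrightarrow> l < 2 ^ k \<Longrightarrow> p' < n choose k \<Longrightarrow> l' < 2 ^ k
      \<Longrightarrow> W p l = W p' l' \<Longrightarrow> p = p' \<and> l = l'"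
    using pattern_word_enumeration[of n k] by blast
  show ?thesis
  proof (rule feasible_vector_blockwise[where W = W])
    show "distinguishable G2 (W p l) (W p' l')"
      if "p < n choose k" "l < 2 ^ k" "p' < n choose k" "l' < 2 ^ k" "(p, l) \<noteq> (p', l')" for p l p' l'
      using words[OF that(1,2)] words[OF that(3,4)] inj[OF that(1-4)] that(5)
      by (intro distinguishable_empty_graph) auto
  qed (use assms words G1 in simp_all)
qed

lemma optimal_rate_on_sum_line:
  assumes "0 \<le> R1" "R1 \<le> bin_entropy (2/3)"
  shows "optimal_rate \<Sigma> G1 G2 R1 (log 2 3 - R1)"
proof -
  have sum_le: "R1' + R2' \<le> log 2 3" if "feasible_rate \<Sigma> G1 G2 R1' R2'" for R1' R2'
    using feasible_rate_sum_le[OF _ _ that] distinct by simp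
  have "feasible_rate \<Sigma> G1 G2 (bin_entropy (2/3) - (bin_entropy (2/3) - R1)) (2/3 + (bin_entropy (2/3) - R1))"
    using assms by (intro feasible_rate_from_binomial_codes feasible_vector_patterns) auto
  then have "feasible_rate \<Sigma> G1 G2 R1 (log 2 3 - R1)" by (simp add: bin_entropy_two_thirds)
  then show ?thesis unfolding optimal_rate_def using sum_le by force
qed

lemma optimal_rate_on_entropy_curve:
  assumes "1/2 \<le> R2" "R2 \<le> 2/3"
  shows "optimal_rate \<Sigma> G1 G2 (bin_entropy R2) R2"
  unfolding optimal_rate_def
proof (intro conjI allI impI notI)
  have "feasible_rate \<Sigma> G1 G2 (bin_entropy R2 - 0) (R2 + 0)"
    using assms bin_entropy_nonneg[of R2] by (intro feasible_rate_from_binomial_codes feasible_vector_patterns) auto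
  then show "feasible_rate \<Sigma> G1 G2 (bin_entropy R2) R2" by simp
  show False if "bin_entropy R2 < R1'" "feasible_rate \<Sigma> G1 G2 R1' R2" for R1'
    using feasible_rate_user1_le[OF that(2) assms] that(1) by simp
  show False if "R2 < R2'" "feasible_rate \<Sigma> G1 G2 (bin_entropy R2) R2'" for R2'
  proof (cases "R2' \<le> 2/3")
    case True
    then have "bin_entropy R2' < bin_entropy R2" using bin_entropy_strict_antimono assms that(1) by simp
    then show False using feasible_rate_user1_le[OF that(2), of R2'] True that(1) assms by simp
  next
    case False
    have "bin_entropy (2/3) \<le> bin_entropy R2" using bin_entropy_antimono assms by simp
    then show False
      using feasible_rate_sum_le[OF _ _ that(2)] False distinct by (simp add: bin_entropy_two_thirds)
  qed
qed

end

theorem proposition17: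
  fixes \<sigma>0 \<sigma>1 \<sigma>2 :: 'a
  assumes "\<sigma>0 \<noteq> \<sigma>1" "\<sigma>0 \<noteq> \<sigma>2" "\<sigma>1 \<noteq> \<sigma>2"
  defines "\<Sigma> \<equiv> {\<sigma>0, \<sigma>1, \<sigma>2}"
    and "G1 \<equiv> (\<lambda>a b. (a = \<sigma>0 \<and> b = \<sigma>1) \<or> (a = \<sigma>1 \<and> b = \<sigma>0))"
    and "G2 \<equiv> (\<lambda>a b. False)"
  shows "(\<forall>R1 \<in> {0 .. bin_entropy (2/3)}. optimal_rate \<Sigma> G1 G2 R1 (log 2 3 - R1))
       \<and> (\<forall>R2 \<in> {1/2 .. 2/3}. optimal_rate \<Sigma> G1 G2 (bin_entropy R2) R2)"
proof -
  have "three_letters \<sigma>0 \<sigma>1 \<sigma>2" using assms(1-3) by unfold_locales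
  then show ?thesis unfolding \<Sigma>_def G1_def G2_def
    using three_letters.optimal_rate_on_sum_line three_letters.optimal_rate_on_entropy_curve by fastforce
qed

end
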